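(* For $t\in(0,1)$ and $n\ge0$, $$x_n=2n+1+\alpha+\beta+tR_n,$$ $$\alpha_n=y_{n+1}-y_n+t(r_n-r_{n+1}),$$ $$\mathsf p_1(n,t)=-y_n(t)+t\,r_n(t).$$
   Context: Fix $\alpha>0$, $\beta>0$, and real $A,B$ with $A\ge0$, $A+B\ge0$, not both zero; $\theta$ is the Heaviside step function. For $t\in(0,1)$ let $w(x;t)=x^\alpha(1-x)^\beta(A+B\theta(x-t))$ on $[0,1]$, and let $P_n(x)=P_n(x;t)=x^n+\mathsf p_1(n,t)x^{n-1}+\cdots$ be the monic orthogonal polynomials: $\int_0^1P_iP_jw\,dx=h_i(t)\delta_{ij}$, $h_i>0$, satisfying $xP_n=P_{n+1}+\alpha_nP_n+\beta_nP_{n-1}$, $P_{-1}=0$, $\beta_n=h_n/h_{n-1}$, $\mathsf p_1(0,t)=0$. Define $R_n(t)=B\,t^\alpha(1-t)^\beta P_n(t;t)^2/h_n$, $r_n(t)=B\,t^\alpha(1-t)^\beta P_n(t;t)P_{n-1}(t;t)/h_{n-1}$ ($r_0=0$), $x_n(t)=\frac{\beta}{h_n}\int_0^1\frac{P_n(y)^2}{1-y}\,y^\alpha(1-y)^\beta(A+B\theta(y-t))\,dy$, $y_n(t)=\frac{\beta}{h_{n-1}}\int_0^1\frac{P_n(y)P_{n-1}(y)}{1-y}\,y^\alpha(1-y)^\beta(A+B\theta(y-t))\,dy$ ($y_0=0$). *)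

theory Defs
  imports "HOL-Analysis.Analysis" "HOL-Computational_Algebra.Polynomial"
begin

text \<open>Heaviside step function (the value at 0 is irrelevant: a null set).\<close>
definition heav :: "real \<Rightarrow> real" where
  "heav x = (if x \<ge> 0 then 1 else 0)"

definition wt :: "real \<Rightarrow> real \<Rightarrow> real \<Rightarrow> real \<Rightarrow> real \<Rightarrow> real \<Rightarrow> real" where
  "wt a b A B t x = x powr a * (1 - x) powr b * (A + B * heav (x - t))"

definition hn :: "real \<Rightarrow> real \<Rightarrow> real \<Rightarrow> real \<Rightarrow> real \<Rightarrow> (nat \<Rightarrow> real poly) \<Rightarrow> nat \<Rightarrow> real" where
  "hn a b A B t P n = (LBINT x:{0..1}. (poly (P n) x)^2 * wt a b A B t x)"

definition Rn :: "real \<Rightarrow> real \<Rightarrow> real \<Rightarrow> real \<Rightarrow> real \<Rightarrow> (nat \<Rightarrow> real poly) \<Rightarrow> nat \<Rightarrow> real" where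
  "Rn a b A B t P n = B * t powr a * (1 - t) powr b * (poly (P n) t)^2 / hn a b A B t P n"

definition rn :: "real \<Rightarrow> real \<Rightarrow> real \<Rightarrow> real \<Rightarrow> real \<Rightarrow> (nat \<Rightarrow> real poly) \<Rightarrow> nat \<Rightarrow> real" where
  "rn a b A B t P n = (if n = 0 then 0 else
     B * t powr a * (1 - t) powr b * poly (P n) t * poly (P (n - 1)) t / hn a b A B t P (n - 1))"

definition xn :: "real \<Rightarrow> real \<Rightarrow> real \<Rightarrow> real \<Rightarrow> real \<Rightarrow> (nat \<Rightarrow> real poly) \<Rightarrow> nat \<Rightarrow> real" where
  "xn a b A B t P n = b / hn a b A B t P n *
     (LBINT y:{0..1}. (poly (P n) y)^2 / (1 - y) * wt a b A B t y)"

definition yn :: "real \<Rightarrow> real \<Rightarrow> real \<Rightarrow> real \<Rightarrow> real \<Rightarrow> (nat \<Rightarrow> real poly) \<Rightarrow> nat \<Rightarrow> real" where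
  "yn a b A B t P n = (if n = 0 then 0 else b / hn a b A B t P (n - 1) *
     (LBINT y:{0..1}. poly (P n) y * poly (P (n - 1)) y / (1 - y) * wt a b A B t y))"

definition p1 :: "(nat \<Rightarrow> real poly) \<Rightarrow> nat \<Rightarrow> real" where
  "p1 P n = (if n = 0 then 0 else coeff (P n) (n - 1))"

end

theory Submission
  imports Defs
begin

(*
  Write u(y) = y^a (1-y)^b for the Jacobi factor of the weight.  Differentiating
  y^(a+1) (1-y)^b f(y) and integrating over [c,1] gives, for every polynomial f,
      b \<integral>_c^1 f u/(1-y) = (a+b+1) \<integral>_c^1 f u + \<integral>_c^1 (y f') u + c^(a+1) (1-c)^b f(c).
  The weight w = u (A + B heav(y - t)) is A u on [0,1] plus B u on [t,1]; adding the cases c = 0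
  and c = t yields the weighted identity
      b J(f) = (a+b+1) I(f) + I(y f') + B t^(a+1) (1-t)^b f(t),
  where I(f) = \<integral> f w and J(f) = \<integral> f w/(1-y).  With f = P_n^2 orthogonality gives
  I(y (P_n^2)') = 2n h_n, hence the formula for x_n; with f = P_n P_(n-1) it gives
  I(y (P_n P_(n-1))') = -p_1(n) h_(n-1), hence the formula for p_1(n).  Finally comparing the
  coefficients of x^n in the three-term recurrence gives al_n = p_1(n) - p_1(n+1).
*)

definition jac :: "real \<Rightarrow> real \<Rightarrow> real \<Rightarrow> real" where
  "jac a b y = y powr a * (1 - y) powr b"

lemma jac_nonneg: "0 \<le> y \<Longrightarrow> y \<le> 1 \<Longrightarrow> 0 \<le> jac a b y"
  unfolding jac_def by simp

lemma continuous_on_poly_jac: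
  assumes "a > 0" "b > 0" "0 \<le> c"
  shows "continuous_on {c..1} (\<lambda>y. poly q y * jac a b y)"
  unfolding jac_def using assms
  by (intro continuous_intros continuous_on_powr') auto

lemma poly_jac_integrable:
  assumes "a > 0" "b > 0" "0 \<le> c"
  shows "(\<lambda>y. poly q y * jac a b y) absolutely_integrable_on {c..1}"
  by (rule absolutely_integrable_continuous_real[OF continuous_on_poly_jac[OF assms]])

text \<open>The Euler operator y d/dy, which appears when y^(a+1)(1-y)^b f(y) is differentiated.\<close>

definition euler :: "'a::{comm_semiring_1,semiring_no_zero_divisors} poly \<Rightarrow> 'a poly" where
  "euler p = [:0, 1:] * pderiv p"

lemma poly_euler: "poly (euler p) x = x * poly (pderiv p) x"
  by (simp add: euler_def)

lemma coeff_euler: "coeff (euler p) i = of_nat i * coeff p i"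
  by (cases i) (auto simp: euler_def coeff_pderiv)

lemma euler_mult:
  fixes p q :: "'a::{comm_semiring_1,semiring_no_zero_divisors} poly"
  shows "euler (p * q) = p * euler q + q * euler p"
  by (simp add: euler_def pderiv_mult algebra_simps)

lemma jac_primitive_deriv:
  assumes "a > 0" "b > 0" "0 < y" "y < 1"
  shows "((\<lambda>y. y powr (a+1) * (1 - y) powr b * poly f y) has_real_derivative
     (a+b+1) * (poly f y * jac a b y) + poly (euler f) y * jac a b y
       - b * (poly f y / (1 - y) * jac a b y)) (at y)"
proof -
  have d: "((\<lambda>y. y powr (a+1) * (1 - y) powr b * poly f y) has_real_derivative
     (a+1) * y powr a * (1 - y) powr b * poly f y
      + y powr (a+1) * (- (b * (1 - y) powr (b - 1))) * poly f y
      + y powr (a+1) * (1 - y) powr b * poly (pderiv f) y) (at y)"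
    using assms by (auto intro!: derivative_eq_intros simp: algebra_simps)
  have e1: "y powr (a+1) = y * y powr a" using assms by (simp add: powr_add)
  have e2: "(1 - y) powr (b - 1) = (1 - y) powr b / (1 - y)" using assms by (simp add: powr_diff)
  show ?thesis
  proof (rule DERIV_cong[OF d])
    show "(a+1) * y powr a * (1 - y) powr b * poly f y
      + y powr (a+1) * (- (b * (1 - y) powr (b - 1))) * poly f y
      + y powr (a+1) * (1 - y) powr b * poly (pderiv f) y
      = (a+b+1) * (poly f y * jac a b y) + poly (euler f) y * jac a b y
       - b * (poly f y / (1 - y) * jac a b y)"
      using assms unfolding e1 e2 jac_def by (simp add: poly_euler field_simps)
  qed
qed

text \<open>Integration by parts on [c,1] in has_integral form; the boundary term at 1 vanishes.\<close>

lemma jac_ibp_has_integral: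
  assumes "a > 0" "b > 0" "0 \<le> c" "c < 1"
  shows "((\<lambda>y. (a+b+1) * (poly f y * jac a b y) + poly (euler f) y * jac a b y
       - b * (poly f y / (1 - y) * jac a b y)) has_integral
       - (c powr (a+1) * (1 - c) powr b * poly f c)) {c..1}"
proof -
  let ?G = "\<lambda>y. y powr (a+1) * (1 - y) powr b * poly f y"
  have "((\<lambda>y. (a+b+1) * (poly f y * jac a b y) + poly (euler f) y * jac a b y
       - b * (poly f y / (1 - y) * jac a b y)) has_integral ?G 1 - ?G c) {c..1}"
  proof (rule fundamental_theorem_of_calculus_interior)
    show "continuous_on {c..1} ?G"
      using assms by (intro continuous_intros continuous_on_powr') auto
  next
    fix x assume "x \<in> {c<..<1}"
    then show "(?G has_vector_derivative (a+b+1) * (poly f x * jac a b x)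
       + poly (euler f) x * jac a b x - b * (poly f x / (1 - x) * jac a b x)) (at x)"
      using jac_primitive_deriv[of a b x f] assms
      by (auto simp: has_real_derivative_iff_has_vector_derivative)
  qed (use assms in simp)
  then show ?thesis by simp
qed

text \<open>Although u/(1-y) is unbounded near 1 when b < 1, it is integrable: this follows from the
  integration by parts formula with f = 1, since u/(1-y) \<ge> 0.\<close>

lemma poly_jac_div_integrable:
  assumes "a > 0" "b > 0" "0 \<le> c" "c < 1"
  shows "(\<lambda>y. poly q y / (1 - y) * jac a b y) absolutely_integrable_on {c..1}"
proof -
  have ibp: "((\<lambda>y. (a+b+1) * jac a b y - b * (1 / (1 - y) * jac a b y)) has_integral
       - (c powr (a+1) * (1 - c) powr b)) {c..1}"
    using jac_ibp_has_integral[OF assms, of 1] by (simp add: euler_def)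
  have "(\<lambda>y. (a+b+1) * jac a b y) integrable_on {c..1}"
    using poly_jac_integrable[OF assms(1-3), of 1]
    by (intro integrable_on_mult_right) (simp add: set_lebesgue_integral_eq_integral(1))
  from integrable_diff[OF this has_integral_integrable[OF ibp]]
  have "(\<lambda>y. b * (1 / (1 - y) * jac a b y)) integrable_on {c..1}"
    by simp
  then have "(\<lambda>y. 1 / (1 - y) * jac a b y) integrable_on {c..1}"
    using assms by (subst (asm) integrable_on_cmult_iff) auto
  then have div_int: "(\<lambda>y. 1 / (1 - y) * jac a b y) absolutely_integrable_on {c..1}"
    by (rule nonnegative_absolutely_integrable_1) (use assms jac_nonneg in auto)
  have "(\<lambda>y. poly q y * (1 / (1 - y) * jac a b y)) absolutely_integrable_on {c..1}"
  proof (rule absolutely_integrable_bounded_measurable_product_real[OF _ _ _ div_int])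
    show "poly q \<in> borel_measurable (lebesgue_on {c..1})"
      by (intro continuous_imp_measurable_on_sets_lebesgue continuous_intros) auto
    show "bounded (poly q ` {c..1})"
      by (intro compact_imp_bounded compact_continuous_image continuous_intros) auto
  qed simp
  then show ?thesis by (simp add: field_simps)
qed

lemma jac_ibp:
  assumes "a > 0" "b > 0" "0 \<le> c" "c < 1"
  shows "b * integral {c..1} (\<lambda>y. poly f y / (1 - y) * jac a b y)
    = (a+b+1) * integral {c..1} (\<lambda>y. poly f y * jac a b y)
      + integral {c..1} (\<lambda>y. poly (euler f) y * jac a b y)
      + c powr (a+1) * (1 - c) powr b * poly f c"
proof -
  have int: "(\<lambda>y. poly f y * jac a b y) integrable_on {c..1}"
    "(\<lambda>y. poly (euler f) y * jac a b y) integrable_on {c..1}"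
    "(\<lambda>y. poly f y / (1 - y) * jac a b y) integrable_on {c..1}"
    using poly_jac_integrable[OF assms(1-3)] poly_jac_div_integrable[OF assms]
    by (simp_all add: set_lebesgue_integral_eq_integral(1))
  have "((\<lambda>y. (a+b+1) * (poly f y * jac a b y) + poly (euler f) y * jac a b y
       - b * (poly f y / (1 - y) * jac a b y)) has_integral
       (a+b+1) * integral {c..1} (\<lambda>y. poly f y * jac a b y)
       + integral {c..1} (\<lambda>y. poly (euler f) y * jac a b y)
       - b * integral {c..1} (\<lambda>y. poly f y / (1 - y) * jac a b y)) {c..1}"
    by (intro has_integral_diff has_integral_add has_integral_mult_right integrable_integral int)
  from has_integral_unique[OF this jac_ibp_has_integral[OF assms]] show ?thesis
    by linarith
qed

lemma poly_square_jac_integral_pos: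
  fixes p :: "real poly"
  assumes "a > 0" "b > 0" "0 \<le> c" "c < d" "d \<le> 1" "p \<noteq> 0"
  shows "integral {c..d} (\<lambda>y. poly (p * p) y * jac a b y) > 0"
proof -
  define f where "f = (\<lambda>y. poly (p * p) y * jac a b y)"
  have cf: "continuous_on {c..d} f"
    using continuous_on_subset[OF continuous_on_poly_jac[OF assms(1-3), of "p*p"]] assms
    unfolding f_def by auto
  have fnn: "\<And>y. y \<in> {c..d} \<Longrightarrow> 0 \<le> f y"
    unfolding f_def using assms jac_nonneg by (auto intro!: mult_nonneg_nonneg)
  have intf: "f integrable_on {c..d}"
    using cf integrable_continuous_real by blast
  have "integral {c..d} f \<noteq> 0"
  proof
    assume "integral {c..d} f = 0"
    then have hz: "(f has_integral 0) (cbox c d)"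
      using integrable_integral[OF intf] by simp
    have "{c<..<d} \<subseteq> {x. poly p x = 0}"
    proof
      fix x assume x: "x \<in> {c<..<d}"
      have "f x = 0"
        by (rule has_integral_0_cbox_imp_0[of c d f]) (use cf fnn hz x in auto)
      moreover have "jac a b x > 0" using x assms unfolding jac_def by auto
      ultimately show "x \<in> {x. poly p x = 0}" unfolding f_def by simp
    qed
    then have "finite {c<..<d}" using poly_roots_finite[OF assms(6)] finite_subset by blast
    then show False using infinite_Ioo[OF assms(4)] by simp
  qed
  with integral_nonneg[OF intf fnn] show ?thesis unfolding f_def by simp
qed

lemma step_weight_split:
  fixes g :: "real \<Rightarrow> real"
  assumes "0 \<le> t" "t \<le> 1" and g_int: "(\<lambda>y. g y * jac a b y) absolutely_integrable_on {0..1}"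
  shows "(\<lambda>y. g y * wt a b A B t y) absolutely_integrable_on {0..1}"
    "integral {0..1} (\<lambda>y. g y * wt a b A B t y)
      = A * integral {0..1} (\<lambda>y. g y * jac a b y) + B * integral {t..1} (\<lambda>y. g y * jac a b y)"
proof -
  define h where "h = (\<lambda>y. g y * jac a b y)"
  have split: "(\<lambda>y. g y * wt a b A B t y) = (\<lambda>y. A * h y + B * (if y \<in> {t..} then h y else 0))"
    by (rule ext) (auto simp: wt_def heav_def jac_def h_def algebra_simps)
  have h_int: "h absolutely_integrable_on {0..1}" using g_int by (simp add: h_def)
  have "h absolutely_integrable_on {t..1}"
    using absolutely_integrable_on_subinterval[OF h_int] assms by auto
  then have "(\<lambda>y. if y \<in> {t..1} then h y else 0) absolutely_integrable_on UNIV"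
    using absolutely_integrable_restrict_UNIV by blast
  moreover have "(\<lambda>y. if y \<in> {0..1} then (if y \<in> {t..} then h y else 0) else 0)
      = (\<lambda>y. if y \<in> {t..1} then h y else 0)"
    using assms by (intro ext) auto
  ultimately have tail_int: "(\<lambda>y. if y \<in> {t..} then h y else 0) absolutely_integrable_on {0..1}"
    using absolutely_integrable_restrict_UNIV[of "{0..1}" "\<lambda>y. if y \<in> {t..} then h y else 0"]
    by simp
  show "(\<lambda>y. g y * wt a b A B t y) absolutely_integrable_on {0..1}"
    unfolding split by (intro set_integral_add(1) set_integrable_mult_right h_int tail_int)
  have "integral {0..1} (\<lambda>y. g y * wt a b A B t y)
      = A * integral {0..1} h + B * integral {0..1} (\<lambda>y. if y \<in> {t..} then h y else 0)"
    unfolding split using h_int tail_int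
    by (subst integral_add) (simp_all add: set_lebesgue_integral_eq_integral(1))
  also have "integral {0..1} (\<lambda>y. if y \<in> {t..} then h y else 0) = integral ({t..} \<inter> {0..1}) h"
    by (rule integral_restrict_Int)
  also have "{t..} \<inter> {0..1} = {t..(1::real)}"
    using assms by auto
  finally show "integral {0..1} (\<lambda>y. g y * wt a b A B t y)
      = A * integral {0..1} (\<lambda>y. g y * jac a b y) + B * integral {t..1} (\<lambda>y. g y * jac a b y)"
    by (simp add: h_def)
qed

text \<open>The quantities of the theorem are Lebesgue integrals (LBINT); for measurable absolutely
  integrable integrands they agree with gauge integrals, in which the calculus is done.\<close>

lemma lborel_set_integral_eq_integral:
  fixes f :: "real \<Rightarrow> real" and c d :: real
  assumes "f absolutely_integrable_on {c..d}" "f \<in> borel_measurable borel"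
  shows "(LBINT x:{c..d}. f x) = integral {c..d} f"
proof -
  have "(\<lambda>x. indicator {c..d} x *\<^sub>R f x) \<in> borel_measurable lborel"
    using assms(2) by measurable
  from integrable_completion[OF this] have "set_integrable lborel {c..d} f"
    using assms(1) unfolding set_integrable_def by simp
  then show ?thesis by (rule set_borel_integral_eq_integral(2))
qed

lemma poly_measurable[measurable]: "poly (q::real poly) \<in> borel_measurable borel"
  by (intro borel_measurable_continuous_onI continuous_intros)

lemma wt_measurable[measurable]: "wt a b A B t \<in> borel_measurable borel"
  unfolding wt_def heav_def by measurable

locale step_jacobi_family =
  fixes a b A B t :: real and P :: "nat \<Rightarrow> real poly"
  assumes apos: "a > 0" and bpos: "b > 0" and Anonneg: "A \<ge> 0" and ABnonneg: "A + B \<ge> 0"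
    and notboth: "\<not> (A = 0 \<and> B = 0)" and tpos: "0 < t" and tlt: "t < 1"
    and monic: "\<forall>k. degree (P k) = k \<and> lead_coeff (P k) = 1"
    and orth: "\<forall>i j. i \<noteq> j \<longrightarrow>
                 (LBINT x:{0..1}. poly (P i) x * poly (P j) x * wt a b A B t x) = 0"
begin

definition I :: "real poly \<Rightarrow> real" where
  "I q = integral {0..1} (\<lambda>y. poly q y * wt a b A B t y)"

definition J :: "real poly \<Rightarrow> real" where
  "J q = integral {0..1} (\<lambda>y. poly q y / (1 - y) * wt a b A B t y)"

lemma I_integrable: "(\<lambda>y. poly q y * wt a b A B t y) absolutely_integrable_on {0..1}"
  using step_weight_split(1) tpos tlt poly_jac_integrable[OF apos bpos order_refl] by simp

lemma J_integrable: "(\<lambda>y. poly q y / (1 - y) * wt a b A B t y) absolutely_integrable_on {0..1}"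
  by (rule step_weight_split(1)[OF less_imp_le[OF tpos] less_imp_le[OF tlt]
        poly_jac_div_integrable[OF apos bpos order_refl zero_less_one]])

lemma I_split: "I q = A * integral {0..1} (\<lambda>y. poly q y * jac a b y)
    + B * integral {t..1} (\<lambda>y. poly q y * jac a b y)"
  unfolding I_def
  by (rule step_weight_split(2)[OF less_imp_le[OF tpos] less_imp_le[OF tlt]
        poly_jac_integrable[OF apos bpos order_refl]])

lemma J_split: "J q = A * integral {0..1} (\<lambda>y. poly q y / (1 - y) * jac a b y)
    + B * integral {t..1} (\<lambda>y. poly q y / (1 - y) * jac a b y)"
  unfolding J_def
  by (rule step_weight_split(2)[OF less_imp_le[OF tpos] less_imp_le[OF tlt]
        poly_jac_div_integrable[OF apos bpos order_refl zero_less_one]])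

lemma LBINT_I: "(LBINT x:{0..1}. poly q x * wt a b A B t x) = I q"
  unfolding I_def by (rule lborel_set_integral_eq_integral[OF I_integrable]) measurable

lemma LBINT_J: "(LBINT x:{0..1}. poly q x / (1 - x) * wt a b A B t x) = J q"
  unfolding J_def by (rule lborel_set_integral_eq_integral[OF J_integrable]) measurable

lemma I_add: "I (p + q) = I p + I q"
  unfolding I_def using I_integrable[of p] I_integrable[of q]
  by (simp add: distrib_right integral_add set_lebesgue_integral_eq_integral(1))

lemma I_smult: "I (smult c p) = c * I p"
  unfolding I_def by (simp add: mult.assoc)

text \<open>The weighted integration by parts identity: the case c = 0 of jac_ibp weighted by A plus
  the case c = t weighted by B.\<close>

lemma J_ibp: "b * J f = (a+b+1) * I f + I (euler f)
   + B * t * t powr a * (1 - t) powr b * poly f t"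
proof -
  have "t powr (a + 1) = t * t powr a" using tpos by (simp add: powr_add)
  then show ?thesis
    using jac_ibp[OF apos bpos order_refl zero_less_one, of f]
      jac_ibp[OF apos bpos less_imp_le[OF tpos] tlt, of f] apos
    unfolding J_split I_split by (simp add: algebra_simps)
qed

lemma P_degree: "degree (P k) = k" and P_lead: "coeff (P k) k = 1"
  using monic[rule_format, of k] by auto

lemma P_coeff_above: "k < i \<Longrightarrow> coeff (P k) i = 0"
  using P_degree[of k] by (simp add: coeff_eq_0)

lemma P_orth: "i \<noteq> j \<Longrightarrow> I (P i * P j) = 0"
  using orth LBINT_I[of "P i * P j"] by (simp add: mult.assoc)

lemma P_reduce:
  assumes "\<forall>i>m. coeff q i = 0"
  shows "\<forall>i\<ge>m. coeff (q - smult (coeff q m) (P m)) i = 0"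
proof (intro allI impI)
  fix i assume "m \<le> i"
  then consider "i = m" | "m < i" by linarith
  then show "coeff (q - smult (coeff q m) (P m)) i = 0"
    by cases (simp_all add: assms P_lead P_coeff_above)
qed

text \<open>P_n is orthogonal to every polynomial of degree below m, for m \<le> n: subtract multiples
  of P_(m-1), P_(m-2), ... to lower the degree.\<close>

lemma P_orth_low: "m \<le> n \<Longrightarrow> (\<forall>i\<ge>m. coeff q i = 0) \<Longrightarrow> I (P n * q) = 0"
proof (induction m arbitrary: q)
  case 0
  then have "q = 0" by (intro poly_eqI) auto
  then show ?case by (simp add: I_def)
next
  case (Suc m)
  define q' where "q' = q - smult (coeff q m) (P m)"
  have "\<forall>i\<ge>m. coeff q' i = 0"
    unfolding q'_def using Suc.prems(2) by (intro P_reduce) (simp add: Suc_le_eq)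
  then have "I (P n * q') = 0" using Suc by simp
  moreover have "P n * q = P n * q' + smult (coeff q m) (P n * P m)"
    by (simp add: q'_def algebra_simps)
  moreover have "I (P n * P m) = 0" using P_orth Suc.prems by simp
  ultimately show ?case by (simp add: I_add I_smult)
qed

lemma P_orth_proj:
  assumes "\<forall>i>m. coeff q i = 0"
  shows "I (P m * q) = coeff q m * I (P m * P m)"
proof -
  define r where "r = q - smult (coeff q m) (P m)"
  have "\<forall>i\<ge>m. coeff r i = 0"
    unfolding r_def using assms by (rule P_reduce)
  then have "I (P m * r) = 0" by (rule P_orth_low[OF order_refl])
  moreover have "P m * q = P m * r + smult (coeff q m) (P m * P m)"
    by (simp add: r_def algebra_simps)
  ultimately show ?thesis by (simp add: I_add I_smult)
qed

lemma hn_eq_I: "hn a b A B t P n = I (P n * P n)"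
  unfolding hn_def power2_eq_square using LBINT_I[of "P n * P n"] by simp

text \<open>h_n = A \<integral>_0^t P_n^2 u + (A+B) \<integral>_t^1 P_n^2 u, both pieces positive and A, A+B \<ge> 0
  not both zero, so h_n > 0.\<close>

lemma hn_pos: "I (P n * P n) > 0"
proof -
  define K0 where "K0 = integral {0..t} (\<lambda>y. poly (P n * P n) y * jac a b y)"
  define K1 where "K1 = integral {t..1} (\<lambda>y. poly (P n * P n) y * jac a b y)"
  have Pnz: "P n \<noteq> 0" using P_lead[of n] by auto
  have combine: "K0 + K1 = integral {0..1} (\<lambda>y. poly (P n * P n) y * jac a b y)"
    unfolding K0_def K1_def
  proof (rule Henstock_Kurzweil_Integration.integral_combine)
    show "(\<lambda>y. poly (P n * P n) y * jac a b y) integrable_on {0..1}"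
      using poly_jac_integrable[OF apos bpos order_refl]
      by (rule set_lebesgue_integral_eq_integral(1))
  qed (use tpos tlt in auto)
  have "I (P n * P n) = A * (K0 + K1) + B * K1"
    unfolding combine unfolding K1_def by (rule I_split)
  then have I_K: "I (P n * P n) = A * K0 + (A + B) * K1"
    by (simp add: algebra_simps)
  have "K0 > 0" unfolding K0_def
    by (rule poly_square_jac_integral_pos[OF apos bpos order_refl tpos less_imp_le[OF tlt] Pnz])
  moreover have "K1 > 0" unfolding K1_def
    by (rule poly_square_jac_integral_pos[OF apos bpos less_imp_le[OF tpos] tlt order_refl Pnz])
  ultimately show ?thesis
    using I_K Anonneg ABnonneg notboth
    by (cases "A = 0") (auto intro: add_pos_nonneg mult_nonneg_nonneg)
qed

lemma I_euler_square: "I (euler (P n * P n)) = 2 * real n * I (P n * P n)"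
proof -
  have "I (P n * euler (P n)) = real n * I (P n * P n)"
    using P_orth_proj[of n "euler (P n)"] by (simp add: coeff_euler P_lead P_coeff_above)
  then show ?thesis unfolding euler_mult I_add by simp
qed

lemma I_euler_adjacent:
  "I (euler (P (Suc m) * P m)) = - p1 P (Suc m) * I (P m * P m)"
proof -
  let ?n = "Suc m"
  have lower: "I (P ?n * euler (P m)) = 0"
    by (rule P_orth_low[OF order_refl]) (auto simp: coeff_euler P_coeff_above)
  define r where "r = euler (P ?n) - smult (real ?n) (P ?n)"
  have coeff_r: "coeff r i = (real i - real ?n) * coeff (P ?n) i" for i
    by (simp add: r_def coeff_euler algebra_simps)
  have proj: "I (P m * r) = coeff r m * I (P m * P m)"
  proof (rule P_orth_proj, intro allI impI)
    fix i assume "m < i"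
    then consider "i = ?n" | "?n < i" by linarith
    then show "coeff r i = 0" by cases (simp_all add: coeff_r P_coeff_above)
  qed
  have "P m * euler (P ?n) = smult (real ?n) (P m * P ?n) + P m * r"
    by (simp add: r_def algebra_simps)
  then have upper: "I (P m * euler (P ?n)) = - p1 P ?n * I (P m * P m)"
    using proj P_orth[of m ?n] by (simp add: I_add I_smult coeff_r p1_def)
  show ?thesis using lower upper by (simp add: euler_mult I_add algebra_simps)
qed

text \<open>J_ibp with f = P_n^2, divided by h_n.\<close>

lemma xn_formula: "xn a b A B t P n = 2 * real n + 1 + a + b + t * Rn a b A B t P n"
proof -
  define h where "h = I (P n * P n)"
  define bdry where "bdry = B * t powr a * (1 - t) powr b * (poly (P n) t)^2"
  have "xn a b A B t P n = b * J (P n * P n) / h"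
    unfolding xn_def hn_eq_I h_def power2_eq_square using LBINT_J[of "P n * P n"] by simp
  also have "b * J (P n * P n) = (2 * real n + 1 + a + b) * h + t * bdry"
    using J_ibp[of "P n * P n"] I_euler_square[of n]
    by (simp add: h_def bdry_def power2_eq_square algebra_simps)
  also have "((2 * real n + 1 + a + b) * h + t * bdry) / h = 2 * real n + 1 + a + b + t * (bdry / h)"
    using hn_pos[of n] by (simp add: h_def field_simps)
  also have "bdry / h = Rn a b A B t P n"
    unfolding Rn_def hn_eq_I h_def bdry_def ..
  finally show ?thesis .
qed

text \<open>J_ibp with f = P_n P_(n-1), divided by h_(n-1).\<close>

lemma p1_formula: "p1 P n = - yn a b A B t P n + t * rn a b A B t P n"
proof (cases n)
  case 0
  then show ?thesis by (simp add: p1_def yn_def rn_def)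
next
  case (Suc m)
  define h where "h = I (P m * P m)"
  define bdry where "bdry = B * t powr a * (1 - t) powr b * poly (P n) t * poly (P m) t"
  have "yn a b A B t P n = b * J (P n * P m) / h"
    unfolding yn_def hn_eq_I h_def using Suc LBINT_J[of "P n * P m"] by simp
  also have "b * J (P n * P m) = - p1 P n * h + t * bdry"
    using J_ibp[of "P n * P m"] I_euler_adjacent[of m] P_orth[of n m] Suc
    by (simp add: h_def bdry_def algebra_simps)
  also have "(- p1 P n * h + t * bdry) / h = - p1 P n + t * (bdry / h)"
    using hn_pos[of m] by (simp add: h_def field_simps)
  also have "bdry / h = rn a b A B t P n"
    unfolding rn_def hn_eq_I h_def bdry_def using Suc by simp
  finally show ?thesis by simp
qed

text \<open>Comparing coefficients of x^n in x P_n = P_(n+1) + al_n P_n + be_n P_(n-1).\<close>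

lemma recurrence_alpha:
  assumes recur: "[:0, 1:] * P n = P (Suc n) + smult (al n) (P n)
                    + smult (be n) (if n = 0 then 0 else P (n - 1))"
  shows "al n = p1 P n - p1 P (n + 1)"
proof -
  have "coeff ([:0, 1:] * P n) n = p1 P n"
    by (cases n) (simp_all add: p1_def)
  moreover have "coeff (if n = 0 then 0 else P (n - 1)) n = 0"
    using P_coeff_above[of "n - 1" n] by auto
  ultimately show ?thesis
    using arg_cong[OF recur, of "\<lambda>p. coeff p n"] P_lead[of n] by (simp add: p1_def)
qed

end

theorem lemma3p1:
  fixes a b A B t :: real and P :: "nat \<Rightarrow> real poly"
    and al be :: "nat \<Rightarrow> real" and n :: nat
  assumes "a > 0" and "b > 0" and "A \<ge> 0" and "A + B \<ge> 0" and "\<not> (A = 0 \<and> B = 0)"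
    and "0 < t" and "t < 1"
    and monic: "\<forall>k. degree (P k) = k \<and> lead_coeff (P k) = 1"
    and orth: "\<forall>i j. i \<noteq> j \<longrightarrow>
                 (LBINT x:{0..1}. poly (P i) x * poly (P j) x * wt a b A B t x) = 0"
    and recur: "\<forall>k. [:0, 1:] * P k = P (Suc k) + smult (al k) (P k)
                    + smult (be k) (if k = 0 then 0 else P (k - 1))"
  shows "xn a b A B t P n = 2 * real n + 1 + a + b + t * Rn a b A B t P n
    \<and> al n = yn a b A B t P (n + 1) - yn a b A B t P n
                + t * (rn a b A B t P n - rn a b A B t P (n + 1))
    \<and> p1 P n = - yn a b A B t P n + t * rn a b A B t P n"
proof -
  interpret step_jacobi_family a b A B t P
    unfolding step_jacobi_family_def using assms(1-9) by blast
  have "al n = p1 P n - p1 P (n + 1)"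
    using recurrence_alpha recur by blast
  then show ?thesis
    using xn_formula[of n] p1_formula[of n] p1_formula[of "n + 1"] by (simp add: algebra_simps)
qed

end
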